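(* Consider an open chain of $M$ sites, each site $m$ carrying one spinless fermion mode (operators $c_m, c_m^\dagger$ with $\{c_m,c_{m'}^\dagger\}=\delta_{m,m'}$) and one spin-$1/2$. Let $\gamma_m, J_m$ be real numbers with $\gamma_m\neq 0$, and for $1\le m\le M$ define $$\hat h_m^{(L)} = -\gamma_{m-1}c_{m-1}^\dagger c_m + J_{m-1}c_{m-1}^\dagger c_m\sigma_m^-,\qquad \hat h_m^{(R)} = -\gamma_m c_{m+1}^\dagger c_m + J_m c_{m+1}^\dagger c_m \sigma_{m+1}^+,$$ with $\hat h_1^{(L)}=\hat h_M^{(R)}=0$. Fix $Q$ with $1\le Q\le M-2$. Let $|\xi\rangle$ be a state with exactly $Q$ fermions, of the form $|\xi\rangle = c_{f_Q}^\dagger\cdots c_{f_1}^\dagger|\Omega\rangle\otimes|s_1\rangle\otimes\cdots\otimes|s_M\rangle$ with $f_1<\dots<f_Q$, and suppose there is $q\in\{1,\dots,Q\}$ with $f_q\le M-2$ such that sites $f_q+1$ and $f_q+2$ are unoccupied. Then there exist spin states $|s'_{f_q+1}\rangle, |s'_{f_q+2}\rangle$ such that the state $|\xi'\rangle$, obtained from $|\xi\rangle$ by replacing $c_{f_q}^\dagger$ by $c_{f_q+2}^\dagger$ (all other fermion positions unchanged) and replacing $|s_{f_q+1}\rangle,|s_{f_q+2}\rangle$ by $|s'_{f_q+1}\rangle,|s'_{f_q+2}\rangle$ (all other spins unchanged), satisfies $$\hat h_{f_q}^{(R)}|\xi\rangle + \hat h_{f_q+2}^{(L)}|\xi'\rangle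 = 0.$$
   Context: $|\Omega\rangle$ is the fermion vacuum. For the spin on site $m$, $\sigma_m^{x,y,z}$ are Pauli matrices, $\sigma_m^{\pm}=\sigma_m^x\pm i\sigma_m^y$ (so $\sigma^+$ raises and $\sigma^-$ lowers $\sigma^z$). Fermion operators act on the fermionic factor and spin operators on the spin factors of the tensor product. *)

theory Defs
  imports Complex_Main
begin

text \<open>Hilbert space of the chain: basis configurations are pairs (S, sig) where
  S is the set of occupied fermion sites and sig m is the spin on site m
  (True = spin up, i.e. sigma^z = +1; False = spin down).  The fermionic basis vector for
  S = {f_1 < ... < f_Q} is c^dag_{f_Q} ... c^dag_{f_1} |Omega>.\<close>

type_synonym config = "nat set \<times> (nat \<Rightarrow> bool)"
type_synonym state = "config \<Rightarrow> complex"

definition cdag :: "nat \<Rightarrow> state \<Rightarrow> state" where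
  "cdag j \<psi> = (\<lambda>(S, sig). if j \<in> S
      then (-1) ^ card {k \<in> S. j < k} * \<psi> (S - {j}, sig) else 0)"

definition cann :: "nat \<Rightarrow> state \<Rightarrow> state" where
  "cann j \<psi> = (\<lambda>(S, sig). if j \<notin> S
      then (-1) ^ card {k \<in> S. j < k} * \<psi> (insert j S, sig) else 0)"

text \<open>Single-site spin operator given by a 2x2 matrix A (A a b = <a|A|b>).\<close>

definition site_op :: "nat \<Rightarrow> (bool \<Rightarrow> bool \<Rightarrow> complex) \<Rightarrow> state \<Rightarrow> state" where
  "site_op m A \<psi> = (\<lambda>(S, sig). \<Sum>b\<in>UNIV. A (sig m) b * \<psi> (S, sig(m := b)))"

definition pauli_x :: "bool \<Rightarrow> bool \<Rightarrow> complex" where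
  "pauli_x a b = (if a \<noteq> b then 1 else 0)"

definition pauli_y :: "bool \<Rightarrow> bool \<Rightarrow> complex" where
  "pauli_y a b = (if a \<noteq> b then (if a then - \<i> else \<i>) else 0)"

definition pauli_z :: "bool \<Rightarrow> bool \<Rightarrow> complex" where
  "pauli_z a b = (if a = b then (if a then 1 else -1) else 0)"

definition sigma_plus :: "nat \<Rightarrow> state \<Rightarrow> state" where
  "sigma_plus m = site_op m (\<lambda>a b. pauli_x a b + \<i> * pauli_y a b)"

definition sigma_minus :: "nat \<Rightarrow> state \<Rightarrow> state" where
  "sigma_minus m = site_op m (\<lambda>a b. pauli_x a b - \<i> * pauli_y a b)"

definition hL :: "(nat \<Rightarrow> real) \<Rightarrow> (nat \<Rightarrow> real) \<Rightarrow> nat \<Rightarrow> state \<Rightarrow> state" where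
  "hL \<gamma> J m \<psi> = (if m = 1 then (\<lambda>_. 0) else
     (\<lambda>x. - complex_of_real (\<gamma> (m - 1)) * cdag (m - 1) (cann m \<psi>) x
          + complex_of_real (J (m - 1)) * cdag (m - 1) (cann m (sigma_minus m \<psi>)) x))"

definition hR :: "nat \<Rightarrow> (nat \<Rightarrow> real) \<Rightarrow> (nat \<Rightarrow> real) \<Rightarrow> nat \<Rightarrow> state \<Rightarrow> state" where
  "hR M \<gamma> J m \<psi> = (if m = M then (\<lambda>_. 0) else
     (\<lambda>x. - complex_of_real (\<gamma> m) * cdag (m + 1) (cann m \<psi>) x
          + complex_of_real (J m) * cdag (m + 1) (cann m (sigma_plus (m + 1) \<psi>)) x))"

text \<open>Fermion vacuum tensored with the spin product state
  |s_1> (x) ... (x) |s_M>; spins outside 1..M are frozen to the value False.\<close>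

definition vac_spins :: "nat \<Rightarrow> (nat \<Rightarrow> bool \<Rightarrow> complex) \<Rightarrow> state" where
  "vac_spins M s = (\<lambda>(S, sig). if S = {} \<and> (\<forall>m. m \<notin> {1..M} \<longrightarrow> \<not> sig m)
      then (\<Prod>m\<in>{1..M}. s m (sig m)) else 0)"

text \<open>The state c^dag_{f_Q} ... c^dag_{f_1} |Omega> (x) |s_1> ... |s_M>
  for fs = [f_1, ..., f_Q] (c^dag_{f_1} is applied first).\<close>

definition prod_state :: "nat \<Rightarrow> nat list \<Rightarrow> (nat \<Rightarrow> bool \<Rightarrow> complex) \<Rightarrow> state" where
  "prod_state M fs s = fold cdag fs (vac_spins M s)"

end

theory Submission
  imports Defs
begin

text \<open>Both terms move a fermion onto the empty site f + 1, hR from site f and hL from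
  site f + 2, so they land in the same fermion configuration, with the same sign because no
  other fermion is hopped over. Their spin parts are the product state with s(f+1) replaced
  by A s(f+1), where A = -gamma(f) + J(f) sigma+, and the product state with s'(f+2) replaced
  by B s'(f+2), where B = -gamma(f+1) + J(f+1) sigma-. Both matrices are triangular with
  nonzero determinant gamma^2, so s'(f+1) = A s(f+1) and s'(f+2) = -B^-1 s(f+2) are nonzero
  spins for which the two product states differ only by a sign.\<close>

text \<open>For F = {f_1 < ... < f_k} and a fermion-free state psi, occupy F psi is
  c^dag_{f_k} ... c^dag_{f_1} psi.\<close>

definition occupy :: "nat set \<Rightarrow> state \<Rightarrow> state" where
  "occupy F \<psi> = (\<lambda>(S, sig). if S = F then \<psi> ({}, sig) else 0)"

lemma vac_spins_eq_occupy_empty: "vac_spins M s = occupy {} (vac_spins M s)"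
  by (rule ext) (auto simp: occupy_def vac_spins_def)

lemma cdag_occupy_above:
  assumes "\<forall>y\<in>F. y < x"
  shows "cdag x (occupy F \<psi>) = occupy (insert x F) \<psi>"
proof (rule ext, clarify)
  fix S sig
  have "x \<notin> F" using assms by blast
  show "cdag x (occupy F \<psi>) (S, sig) = occupy (insert x F) \<psi> (S, sig)"
  proof (cases "S = insert x F")
    case True
    with assms have "{k \<in> S. x < k} = {}" by auto
    then have "card {k \<in> S. x < k} = 0" by (simp only: card.empty)
    moreover from True \<open>x \<notin> F\<close> have "x \<in> S" "S - {x} = F" by auto
    ultimately have "cdag x (occupy F \<psi>) (S, sig) = \<psi> ({}, sig)"
      by (simp add: cdag_def occupy_def)
    with True show ?thesis by (simp add: occupy_def)
  next
    case False
    with \<open>x \<notin> F\<close> have "\<not> (x \<in> S \<and> S - {x} = F)" by blast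
    with False show ?thesis by (auto simp: cdag_def occupy_def)
  qed
qed

lemma prod_state_eq_occupy:
  "sorted_wrt (<) fs \<Longrightarrow> prod_state M fs s = occupy (set fs) (vac_spins M s)"
proof (induction fs rule: rev_induct)
  case Nil
  then show ?case by (simp add: prod_state_def flip: vac_spins_eq_occupy_empty)
next
  case (snoc x xs)
  then have "sorted_wrt (<) xs" "\<forall>y\<in>set xs. y < x" by (auto simp: sorted_wrt_append)
  with snoc.IH show ?case by (simp add: prod_state_def cdag_occupy_above)
qed

lemma cdag_cann_occupy:
  assumes "i \<in> F" "k \<notin> F" "\<forall>m\<in>F. \<not> (min i k < m \<and> m < max i k)"
  shows "cdag k (cann i (occupy F \<psi>)) = occupy (insert k (F - {i})) \<psi>"
proof (rule ext, clarify)
  fix S sig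
  have support:
    "(k \<in> S \<and> i \<notin> S - {k} \<and> insert i (S - {k}) = F) \<longleftrightarrow> S = insert k (F - {i})"
    using assms(1,2) by auto
  have same_side: "k < m \<longleftrightarrow> i < m" if "m \<in> F" "m \<noteq> i" for m
  proof -
    have "m \<noteq> k" using that(1) assms(2) by blast
    then show ?thesis
      using that(2) assms(3)[THEN bspec, OF that(1)] by (auto simp: min_def max_def split: if_splits)
  qed
  show "cdag k (cann i (occupy F \<psi>)) (S, sig) = occupy (insert k (F - {i})) \<psi> (S, sig)"
  proof (cases "S = insert k (F - {i})")
    case True
    (* both sign exponents count the fermions of F beyond i and k, so the signs cancel *)
    with same_side assms(2)
    have "{m \<in> S. k < m} = {m \<in> F. i < m}" "{m \<in> S - {k}. i < m} = {m \<in> F. i < m}"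
      by auto
    then have "card {m \<in> S. k < m} = card {m \<in> F. i < m}"
      "card {m \<in> S - {k}. i < m} = card {m \<in> F. i < m}"
      by (simp_all only:)
    moreover from True support have "k \<in> S" "i \<notin> S - {k}" "insert i (S - {k}) = F"
      by auto
    ultimately have "cdag k (cann i (occupy F \<psi>)) (S, sig) = \<psi> ({}, sig)"
      by (simp add: cdag_def cann_def occupy_def flip: power_add mult.assoc)
    with True show ?thesis by (simp add: occupy_def)
  next
    case False
    with support have "\<not> (k \<in> S \<and> i \<notin> S - {k} \<and> insert i (S - {k}) = F)"
      by blast
    with False show ?thesis by (auto simp: cdag_def cann_def occupy_def)
  qed
qed

type_synonym spin_mat = "bool \<Rightarrow> bool \<Rightarrow> complex"

definition mat_vec :: "spin_mat \<Rightarrow> (bool \<Rightarrow> complex) \<Rightarrow> bool \<Rightarrow> complex" where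
  "mat_vec A v = (\<lambda>a. \<Sum>b\<in>UNIV. A a b * v b)"

definition det2 :: "spin_mat \<Rightarrow> complex" where
  "det2 A = A True True * A False False - A True False * A False True"

definition raise_mat :: spin_mat where
  "raise_mat a b = pauli_x a b + \<i> * pauli_y a b"

definition lower_mat :: spin_mat where
  "lower_mat a b = pauli_x a b - \<i> * pauli_y a b"

definition hop_mat :: "real \<Rightarrow> real \<Rightarrow> spin_mat \<Rightarrow> spin_mat" where
  "hop_mat c d P a b = - of_real c * (if a = b then 1 else 0) + of_real d * P a b"

lemma mat_vec_zero [simp]: "mat_vec A (\<lambda>_. 0) = (\<lambda>_. 0)"
  by (simp add: mat_vec_def)

lemma raise_mat_eq: "raise_mat a b = (if a \<and> \<not> b then 2 else 0)"
  by (simp add: raise_mat_def pauli_x_def pauli_y_def)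

lemma lower_mat_eq: "lower_mat a b = (if \<not> a \<and> b then 2 else 0)"
  by (simp add: lower_mat_def pauli_x_def pauli_y_def)

lemma det2_hop_mat_raise: "det2 (hop_mat c d raise_mat) = of_real (c\<^sup>2)"
  by (simp add: det2_def hop_mat_def raise_mat_eq power2_eq_square)

lemma det2_hop_mat_lower: "det2 (hop_mat c d lower_mat) = of_real (c\<^sup>2)"
  by (simp add: det2_def hop_mat_def lower_mat_eq power2_eq_square)

lemma mat_vec_nonzero:
  assumes "det2 A \<noteq> 0" "v \<noteq> (\<lambda>_. 0)"
  shows "mat_vec A v \<noteq> (\<lambda>_. 0)"
proof
  assume "mat_vec A v = (\<lambda>_. 0)"
  then have "mat_vec A v True = 0" "mat_vec A v False = 0" by simp_all
  then have rows: "A True True * v True + A True False * v False = 0"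
    "A False True * v True + A False False * v False = 0"
    by (simp_all add: mat_vec_def UNIV_bool add.commute)
  have "det2 A * v True = A False False * (A True True * v True + A True False * v False)
      - A True False * (A False True * v True + A False False * v False)"
    "det2 A * v False = A True True * (A False True * v True + A False False * v False)
      - A False True * (A True True * v True + A True False * v False)"
    by (simp_all add: det2_def algebra_simps)
  then have "det2 A * v True = 0" "det2 A * v False = 0"
    by (simp_all only: rows mult_zero_right diff_self)
  with assms(1) have "v True = 0" "v False = 0" by simp_all
  then have "v = (\<lambda>_. 0)" by (intro ext) (metis (full_types))
  with assms(2) show False by contradiction
qed

lemma mat_vec_surj:
  assumes "det2 A \<noteq> 0"
  shows "\<exists>v. mat_vec A v = w"
proof
  define adj where "adj b = (if b then A False False * w True - A True False * w False
      else A True True * w False - A False True * w True)" for b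
  have "mat_vec A adj b = det2 A * w b" for b
    by (cases b) (simp_all add: mat_vec_def adj_def UNIV_bool det2_def algebra_simps)
  with assms show "mat_vec A (\<lambda>b. adj b / det2 A) = w"
    by (auto simp: fun_eq_iff mat_vec_def simp flip: sum_divide_distrib)
qed

lemma mat_vec_surj_nonzero:
  assumes "det2 A \<noteq> 0" "w \<noteq> (\<lambda>_. 0)"
  shows "\<exists>v. v \<noteq> (\<lambda>_. 0) \<and> mat_vec A v = w"
proof -
  obtain v where "mat_vec A v = w" using mat_vec_surj[OF assms(1)] by blast
  with assms(2) show ?thesis by (intro exI[of _ v]) auto
qed

lemma site_op_hop_mat:
  "site_op m (hop_mat c d P) \<psi> x = - of_real c * \<psi> x + of_real d * site_op m P \<psi> x"
proof (cases x)
  case (Pair S sig)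
  then show ?thesis
    by (cases "sig m") (simp_all add: site_op_def hop_mat_def UNIV_bool algebra_simps fun_upd_idem)
qed

lemma site_op_occupy: "site_op m A (occupy F \<psi>) = occupy F (site_op m A \<psi>)"
  by (auto simp: site_op_def occupy_def fun_eq_iff)

lemma hR_occupy:
  assumes "a \<noteq> M" "a \<in> F" "a + 1 \<notin> F"
  shows "hR M \<gamma> J a (occupy F \<psi>)
    = occupy (insert (a + 1) (F - {a})) (site_op (a + 1) (hop_mat (\<gamma> a) (J a) raise_mat) \<psi>)"
proof -
  have hop: "cdag (a + 1) (cann a (occupy F \<phi>)) = occupy (insert (a + 1) (F - {a})) \<phi>" for \<phi>
    using assms(2,3) by (intro cdag_cann_occupy) auto
  show ?thesis
    unfolding hR_def sigma_plus_def raise_mat_def[abs_def, symmetric] site_op_occupy hop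
    using assms(1) by (auto simp: fun_eq_iff occupy_def site_op_hop_mat)
qed

lemma hL_occupy:
  assumes "b \<noteq> 1" "b \<in> F" "b - 1 \<notin> F"
  shows "hL \<gamma> J b (occupy F \<psi>)
    = occupy (insert (b - 1) (F - {b})) (site_op b (hop_mat (\<gamma> (b - 1)) (J (b - 1)) lower_mat) \<psi>)"
proof -
  have hop: "cdag (b - 1) (cann b (occupy F \<phi>)) = occupy (insert (b - 1) (F - {b})) \<phi>" for \<phi>
    using assms(2,3) by (intro cdag_cann_occupy) auto
  show ?thesis
    unfolding hL_def sigma_minus_def lower_mat_def[abs_def, symmetric] site_op_occupy hop
    using assms(1) by (auto simp: fun_eq_iff occupy_def site_op_hop_mat)
qed

lemma vac_spins_factor:
  assumes "m \<in> {1..M}"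
  shows "vac_spins M s (S, sig) = s m (sig m) * vac_spins M (s(m := \<lambda>_. 1)) (S, sig)"
proof -
  have "(\<Prod>n\<in>{1..M}. s n (sig n)) = s m (sig m) * (\<Prod>n\<in>{1..M} - {m}. s n (sig n))"
    using assms by (intro prod.remove) auto
  moreover have "(\<Prod>n\<in>{1..M}. (s(m := \<lambda>_. 1)) n (sig n))
      = (\<Prod>n\<in>{1..M} - {m}. s n (sig n))"
    using assms by (subst prod.remove[of _ m]) auto
  ultimately show ?thesis by (auto simp: vac_spins_def)
qed

lemma vac_spins_unit_update:
  assumes "m \<in> {1..M}"
  shows "vac_spins M (s(m := \<lambda>_. 1)) (S, sig(m := b)) = vac_spins M (s(m := \<lambda>_. 1)) (S, sig)"
proof -
  have "(\<Prod>n\<in>{1..M}. (s(m := \<lambda>_. 1)) n ((sig(m := b)) n))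
      = (\<Prod>n\<in>{1..M}. (s(m := \<lambda>_. 1)) n (sig n))"
    by (rule prod.cong) auto
  moreover have "(\<forall>n. n \<notin> {1..M} \<longrightarrow> \<not> (sig(m := b)) n)
      \<longleftrightarrow> (\<forall>n. n \<notin> {1..M} \<longrightarrow> \<not> sig n)"
    using assms by auto
  ultimately show ?thesis by (simp only: vac_spins_def prod.case)
qed

lemma site_op_vac_spins:
  assumes "m \<in> {1..M}"
  shows "site_op m A (vac_spins M s) = vac_spins M (s(m := mat_vec A (s m)))"
proof (rule ext, clarify)
  fix S sig
  let ?rest = "vac_spins M (s(m := \<lambda>_. 1)) (S, sig)"
  have "site_op m A (vac_spins M s) (S, sig) = (\<Sum>b\<in>UNIV. A (sig m) b * vac_spins M s (S, sig(m := b)))"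
    by (simp add: site_op_def)
  also have "\<dots> = (\<Sum>b\<in>UNIV. A (sig m) b * s m b) * ?rest"
    by (simp add: vac_spins_factor[OF assms, where s = s] vac_spins_unit_update[OF assms]
        sum_distrib_right mult.assoc)
  also have "\<dots> = vac_spins M (s(m := mat_vec A (s m))) (S, sig)"
    by (subst vac_spins_factor[OF assms, where s = "s(m := mat_vec A (s m))"]) (simp add: mat_vec_def)
  finally show "site_op m A (vac_spins M s) (S, sig) = vac_spins M (s(m := mat_vec A (s m))) (S, sig)" .
qed

lemma vac_spins_negate_site:
  assumes "m \<in> {1..M}"
  shows "vac_spins M (s(m := \<lambda>b. - s m b)) x = - vac_spins M s x"
  using vac_spins_factor[OF assms, where s = s] vac_spins_factor[OF assms, where s = "s(m := \<lambda>b. - s m b)"]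
  by (cases x) simp

lemma sorted_wrt_less_list_update:
  fixes xs :: "'a::order list"
  assumes "sorted_wrt (<) xs" "i < length xs" "xs ! i \<le> y"
    and "\<forall>x\<in>set xs. xs ! i < x \<longrightarrow> y < x"
  shows "sorted_wrt (<) (xs[i := y])"
  unfolding sorted_wrt_iff_nth_less
proof (intro allI impI)
  fix j k assume jk: "j < k" "k < length (xs[i := y])"
  have less: "xs ! j < xs ! k" if "j < k" "k < length xs" for j k
    using assms(1) that by (simp add: sorted_wrt_iff_nth_less)
  show "xs[i := y] ! j < xs[i := y] ! k"
  proof (cases "j = i")
    case True
    with jk less assms(4) show ?thesis by auto
  next
    case False
    with jk less[of j i] less assms(3) show ?thesis
      by (cases "k = i") (auto intro: less_le_trans)
  qed
qed

lemma hR_prod_state: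
  assumes "sorted_wrt (<) fs" "a \<in> set fs" "a + 1 \<notin> set fs" "a + 1 \<in> {1..M}"
  shows "hR M \<gamma> J a (prod_state M fs s) = occupy (insert (a + 1) (set fs - {a}))
    (vac_spins M (s(a + 1 := mat_vec (hop_mat (\<gamma> a) (J a) raise_mat) (s (a + 1)))))"
  using assms by (simp add: prod_state_eq_occupy hR_occupy site_op_vac_spins)

lemma hL_prod_state:
  assumes "sorted_wrt (<) fs" "b \<in> set fs" "b - 1 \<notin> set fs" "b \<in> {1..M}" "b \<noteq> 1"
  shows "hL \<gamma> J b (prod_state M fs s) = occupy (insert (b - 1) (set fs - {b}))
    (vac_spins M (s(b := mat_vec (hop_mat (\<gamma> (b - 1)) (J (b - 1)) lower_mat) (s b))))"
  using assms by (simp add: prod_state_eq_occupy hL_occupy site_op_vac_spins)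

lemma sorted_wrt_list_update_skip:
  fixes fs :: "nat list"
  assumes "sorted_wrt (<) fs" "q < length fs" "fs ! q + 1 \<notin> set fs" "fs ! q + 2 \<notin> set fs"
  shows "sorted_wrt (<) (fs[q := fs ! q + 2])"
    and "set (fs[q := fs ! q + 2]) = insert (fs ! q + 2) (set fs - {fs ! q})"
proof -
  have "fs ! q + 2 < x" if "x \<in> set fs" "fs ! q < x" for x
    using that assms(3,4) by (cases "x = fs ! q + 1 \<or> x = fs ! q + 2") auto
  with assms(1,2) show "sorted_wrt (<) (fs[q := fs ! q + 2])"
    by (intro sorted_wrt_less_list_update) auto
  have "distinct fs" using assms(1) by (simp add: strict_sorted_iff)
  with assms(2) show "set (fs[q := fs ! q + 2]) = insert (fs ! q + 2) (set fs - {fs ! q})"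
    by (simp add: set_update_distinct)
qed

theorem lemma1:
  fixes M Q :: nat and \<gamma> J :: "nat \<Rightarrow> real" and fs :: "nat list"
    and s :: "nat \<Rightarrow> bool \<Rightarrow> complex" and q :: nat
  assumes gamma_nz: "\<forall>m. \<gamma> m \<noteq> 0"
    and Q_bounds: "1 \<le> Q" "Q \<le> M - 2"
    and len: "length fs = Q"
    and sorted: "sorted_wrt (<) fs"
    and in_chain: "\<forall>f \<in> set fs. 1 \<le> f \<and> f \<le> M"
    and spins_nz: "\<forall>m \<in> {1..M}. s m \<noteq> (\<lambda>_. 0)"
    and q_idx: "q < Q"
    and fq_le: "fs ! q \<le> M - 2"
    and free1: "fs ! q + 1 \<notin> set fs"
    and free2: "fs ! q + 2 \<notin> set fs"
  shows "\<exists>s1 s2 :: bool \<Rightarrow> complex. s1 \<noteq> (\<lambda>_. 0) \<and> s2 \<noteq> (\<lambda>_. 0) \<and>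
    (\<forall>x. hR M \<gamma> J (fs ! q) (prod_state M fs s) x
       + hL \<gamma> J (fs ! q + 2)
           (prod_state M (fs[q := fs ! q + 2]) (s(fs ! q + 1 := s1, fs ! q + 2 := s2))) x
       = 0)"
proof -
  define f where "f = fs ! q"
  have f_in: "f \<in> set fs" using q_idx len by (simp add: f_def)
  with in_chain fq_le have sites: "f + 1 \<in> {1..M}" "f + 2 \<in> {1..M}" by (auto simp: f_def)
  define A where "A = hop_mat (\<gamma> f) (J f) raise_mat"
  define B where "B = hop_mat (\<gamma> (f + 1)) (J (f + 1)) lower_mat"
  have "det2 A \<noteq> 0" "det2 B \<noteq> 0"
    using gamma_nz by (simp_all add: A_def B_def det2_hop_mat_raise det2_hop_mat_lower)
  moreover have "s (f + 1) \<noteq> (\<lambda>_. 0)" "(\<lambda>b. - s (f + 2) b) \<noteq> (\<lambda>_. 0)"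
    using spins_nz sites by (auto simp: fun_eq_iff)
  ultimately obtain s2 where s2_nz: "s2 \<noteq> (\<lambda>_. 0)" and s2: "mat_vec B s2 = (\<lambda>b. - s (f + 2) b)"
    using mat_vec_surj_nonzero by blast
  define s1 where "s1 = mat_vec A (s (f + 1))"
  have s1_nz: "s1 \<noteq> (\<lambda>_. 0)"
    unfolding s1_def using \<open>det2 A \<noteq> 0\<close> \<open>s (f + 1) \<noteq> (\<lambda>_. 0)\<close>
    by (rule mat_vec_nonzero)
  have fs': "sorted_wrt (<) (fs[q := f + 2])" "set (fs[q := f + 2]) = insert (f + 2) (set fs - {f})"
    using sorted_wrt_list_update_skip[OF sorted _ free1 free2] q_idx len by (simp_all add: f_def)
  from free1 free2 have free: "f + 1 \<notin> set fs" "f + 2 \<notin> set fs" by (simp_all add: f_def)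
  define F' where "F' = insert (f + 1) (set fs - {f})"
  have hR_term: "hR M \<gamma> J f (prod_state M fs s) = occupy F' (vac_spins M (s(f + 1 := s1)))"
    using hR_prod_state[OF sorted f_in free(1) sites(1)] by (simp add: F'_def A_def s1_def)
  have "insert (f + 2 - 1) (set (fs[q := f + 2]) - {f + 2}) = F'"
    using fs'(2) free by (auto simp: F'_def)
  then have hL_term: "hL \<gamma> J (f + 2) (prod_state M (fs[q := f + 2]) (s(f + 1 := s1, f + 2 := s2)))
      = occupy F' (vac_spins M (s(f + 1 := s1, f + 2 := \<lambda>b. - s (f + 2) b)))"
    using hL_prod_state[OF fs'(1), where b = "f + 2"] fs'(2) free sites(2) s2 by (simp add: B_def)
  have "vac_spins M (s(f + 1 := s1, f + 2 := \<lambda>b. - s (f + 2) b)) x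
      = - vac_spins M (s(f + 1 := s1)) x" for x
    using vac_spins_negate_site[OF sites(2), where s = "s(f + 1 := s1)"] by simp
  with hR_term hL_term have "hR M \<gamma> J f (prod_state M fs s) x
      + hL \<gamma> J (f + 2) (prod_state M (fs[q := f + 2]) (s(f + 1 := s1, f + 2 := s2))) x = 0" for x
    by (cases x) (simp add: occupy_def)
  with s1_nz s2_nz show ?thesis
    unfolding f_def[symmetric] by blast
qed

end
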